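(* Let $G$ be a finite simple graph (with no restriction on its clique number). If $G$ is claw-free and every block of $G$ is a closed graph, then $G$ is strongly chordal and claw-free.
   Context: A strong elimination order of $G$ is an ordering $v_1,\dots,v_n$ of its vertices that is a perfect elimination order (whenever $v_iv_j,v_iv_k\in E(G)$ with $i<j,k$, then $v_jv_k\in E(G)$) and such that whenever $v_iv_k, v_kv_j, v_iv_\ell\in E(G)$ with $i<k<\ell$ and $i<j$, then $v_jv_\ell\in E(G)$; $G$ is strongly chordal if it has one. The claw is $K_{1,3}$. A closed order is an ordering $v_1,\dots,v_n$ such that whenever $v_iv_j,v_iv_k\in E(G)$ and either $i<j,k$ or $i>j,k$, then $v_jv_k\in E(G)$; $G$ is closed if it has one. A block is a maximal subgraph without cut vertices (2-connected). *)

theory Defs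
  imports Main
begin

definition finite_simple_graph :: "'a set \<Rightarrow> ('a \<Rightarrow> 'a \<Rightarrow> bool) \<Rightarrow> bool" where
  "finite_simple_graph V E \<longleftrightarrow> finite V \<and> (\<forall>x y. E x y \<longrightarrow> E y x) \<and> (\<forall>x. \<not> E x x)
     \<and> (\<forall>x y. E x y \<longrightarrow> x \<in> V \<and> y \<in> V)"

definition ordering_of :: "'a set \<Rightarrow> 'a list \<Rightarrow> bool" where
  "ordering_of V vs \<longleftrightarrow> distinct vs \<and> set vs = V"

definition perfect_elim_order :: "('a \<Rightarrow> 'a \<Rightarrow> bool) \<Rightarrow> 'a list \<Rightarrow> bool" where
  "perfect_elim_order E vs \<longleftrightarrow>
    (\<forall>i j k. i < length vs \<and> j < length vs \<and> k < length vs \<and> i < j \<and> i < k \<and> j \<noteq> k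
       \<and> E (vs!i) (vs!j) \<and> E (vs!i) (vs!k) \<longrightarrow> E (vs!j) (vs!k))"

definition strong_elim_order :: "('a \<Rightarrow> 'a \<Rightarrow> bool) \<Rightarrow> 'a list \<Rightarrow> bool" where
  "strong_elim_order E vs \<longleftrightarrow> perfect_elim_order E vs \<and>
    (\<forall>i j k l. i < length vs \<and> j < length vs \<and> k < length vs \<and> l < length vs
       \<and> i < k \<and> k < l \<and> i < j \<and> j \<noteq> l
       \<and> E (vs!i) (vs!k) \<and> E (vs!k) (vs!j) \<and> E (vs!i) (vs!l) \<longrightarrow> E (vs!j) (vs!l))"

definition strongly_chordal :: "'a set \<Rightarrow> ('a \<Rightarrow> 'a \<Rightarrow> bool) \<Rightarrow> bool" where
  "strongly_chordal V E \<longleftrightarrow> (\<exists>vs. ordering_of V vs \<and> strong_elim_order E vs)"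

definition closed_order :: "('a \<Rightarrow> 'a \<Rightarrow> bool) \<Rightarrow> 'a list \<Rightarrow> bool" where
  "closed_order E vs \<longleftrightarrow>
    (\<forall>i j k. i < length vs \<and> j < length vs \<and> k < length vs \<and> j \<noteq> k
       \<and> ((i < j \<and> i < k) \<or> (i > j \<and> i > k))
       \<and> E (vs!i) (vs!j) \<and> E (vs!i) (vs!k) \<longrightarrow> E (vs!j) (vs!k))"

definition closed_graph :: "'a set \<Rightarrow> ('a \<Rightarrow> 'a \<Rightarrow> bool) \<Rightarrow> bool" where
  "closed_graph V E \<longleftrightarrow> (\<exists>vs. ordering_of V vs \<and> closed_order E vs)"

definition claw_free :: "'a set \<Rightarrow> ('a \<Rightarrow> 'a \<Rightarrow> bool) \<Rightarrow> bool" where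
  "claw_free V E \<longleftrightarrow> \<not> (\<exists>a\<in>V. \<exists>b\<in>V. \<exists>c\<in>V. \<exists>d\<in>V. distinct [a,b,c,d]
      \<and> E a b \<and> E a c \<and> E a d \<and> \<not> E b c \<and> \<not> E b d \<and> \<not> E c d)"

definition induced :: "('a \<Rightarrow> 'a \<Rightarrow> bool) \<Rightarrow> 'a set \<Rightarrow> 'a \<Rightarrow> 'a \<Rightarrow> bool" where
  "induced E S = (\<lambda>x y. x \<in> S \<and> y \<in> S \<and> E x y)"

definition joined_in :: "('a \<Rightarrow> 'a \<Rightarrow> bool) \<Rightarrow> 'a set \<Rightarrow> 'a \<Rightarrow> 'a \<Rightarrow> bool" where
  "joined_in E S x y \<longleftrightarrow> x \<in> S \<and> y \<in> S \<and> (induced E S)\<^sup>*\<^sup>* x y"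

definition connected_on :: "('a \<Rightarrow> 'a \<Rightarrow> bool) \<Rightarrow> 'a set \<Rightarrow> bool" where
  "connected_on E S \<longleftrightarrow> S \<noteq> {} \<and> (\<forall>x\<in>S. \<forall>y\<in>S. joined_in E S x y)"

definition cut_vertex_on :: "('a \<Rightarrow> 'a \<Rightarrow> bool) \<Rightarrow> 'a set \<Rightarrow> 'a \<Rightarrow> bool" where
  "cut_vertex_on E S v \<longleftrightarrow> v \<in> S \<and> (\<exists>x y. joined_in E S x y \<and> x \<noteq> v \<and> y \<noteq> v
      \<and> \<not> joined_in E (S - {v}) x y)"

definition nonseparable_on :: "('a \<Rightarrow> 'a \<Rightarrow> bool) \<Rightarrow> 'a set \<Rightarrow> bool" where
  "nonseparable_on E S \<longleftrightarrow> connected_on E S \<and> (\<forall>v. \<not> cut_vertex_on E S v)"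

definition is_block :: "'a set \<Rightarrow> ('a \<Rightarrow> 'a \<Rightarrow> bool) \<Rightarrow> 'a set \<Rightarrow> bool" where
  "is_block V E B \<longleftrightarrow> B \<subseteq> V \<and> nonseparable_on E B
     \<and> (\<forall>B'. B \<subset> B' \<and> B' \<subseteq> V \<longrightarrow> \<not> nonseparable_on E B')"

end

theory Submission
  imports Defs
begin

text \<open>By induction on the number of vertices we prove more: G has a strong elimination ordering,
and even one ending at any prescribed simplicial vertex. If G is itself a block, it is closed, and
a closed ordering of a connected graph has the umbrella property of proper interval orderings;
it can then be rearranged to end at a simplicial vertex c by listing the non-neighbours of c before
its neighbours. Otherwise G is the union of two smaller graphs meeting in at most one cut vertex v,
and their blocks are blocks of G. As G is claw-free, v is simplicial on both sides, so an ordering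
of one side ending at v, with v dropped, followed by an ordering of the other side is a strong
elimination ordering of G.\<close>

definition precedes :: "'a list \<Rightarrow> 'a \<Rightarrow> 'a \<Rightarrow> bool" where
  "precedes xs x y \<longleftrightarrow> (\<exists>i j. i < j \<and> j < length xs \<and> xs!i = x \<and> xs!j = y)"

lemma precedes_Nil [simp]: "\<not> precedes [] x y"
  by (simp add: precedes_def)

lemma precedes_Cons: "precedes (z # xs) x y \<longleftrightarrow> (x = z \<and> y \<in> set xs) \<or> precedes xs x y"
proof
  assume "precedes (z # xs) x y"
  then obtain i j where ij: "i < j" "j < Suc (length xs)" "(z # xs)!i = x" "(z # xs)!j = y"
    unfolding precedes_def by auto
  then obtain j' where j': "j = Suc j'" by (cases j) auto
  show "(x = z \<and> y \<in> set xs) \<or> precedes xs x y"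
  proof (cases i)
    case 0
    then show ?thesis using ij j' by auto
  next
    case (Suc i')
    then show ?thesis using ij j' unfolding precedes_def by auto
  qed
next
  assume "(x = z \<and> y \<in> set xs) \<or> precedes xs x y"
  then show "precedes (z # xs) x y"
  proof
    assume "x = z \<and> y \<in> set xs"
    then obtain j where "j < length xs" "xs!j = y" "x = z" by (auto simp: in_set_conv_nth)
    then show ?thesis unfolding precedes_def by (intro exI[of _ 0] exI[of _ "Suc j"]) auto
  next
    assume "precedes xs x y"
    then obtain i j where "i < j" "j < length xs" "xs!i = x" "xs!j = y"
      unfolding precedes_def by blast
    then show ?thesis unfolding precedes_def by (intro exI[of _ "Suc i"] exI[of _ "Suc j"]) auto
  qed
qed

lemma precedes_in_set: "precedes xs x y \<Longrightarrow> x \<in> set xs \<and> y \<in> set xs"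
  by (induction xs) (auto simp: precedes_Cons)

lemma precedes_append:
  "precedes (xs @ ys) x y \<longleftrightarrow> precedes xs x y \<or> precedes ys x y \<or> (x \<in> set xs \<and> y \<in> set ys)"
  by (induction xs) (auto simp: precedes_Cons)

lemma precedes_singleton [simp]: "\<not> precedes [a] x y"
  by (simp add: precedes_Cons)

lemma precedes_rev: "precedes (rev xs) x y \<longleftrightarrow> precedes xs y x"
  by (induction xs) (auto simp: precedes_Cons precedes_append)

lemma precedes_filter: "precedes (filter P xs) x y \<longleftrightarrow> P x \<and> P y \<and> precedes xs x y"
  by (induction xs) (auto simp: precedes_Cons dest: precedes_in_set)

lemma precedes_irrefl: "distinct xs \<Longrightarrow> \<not> precedes xs x x"
  by (induction xs) (auto simp: precedes_Cons dest: precedes_in_set)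

lemma precedes_trans: "distinct xs \<Longrightarrow> precedes xs x y \<Longrightarrow> precedes xs y z \<Longrightarrow> precedes xs x z"
  by (induction xs) (auto simp: precedes_Cons dest: precedes_in_set)

lemma precedes_asym: "distinct xs \<Longrightarrow> precedes xs x y \<Longrightarrow> \<not> precedes xs y x"
  using precedes_trans precedes_irrefl by metis

lemma precedes_total:
  "x \<in> set xs \<Longrightarrow> y \<in> set xs \<Longrightarrow> x \<noteq> y \<Longrightarrow> precedes xs x y \<or> precedes xs y x"
  by (induction xs) (auto simp: precedes_Cons)

lemma precedes_nth: "i < j \<Longrightarrow> j < length xs \<Longrightarrow> precedes xs (xs!i) (xs!j)"
  unfolding precedes_def by blast

lemma precedes_nth_iff:
  assumes "distinct xs" "i < length xs" "j < length xs"
  shows "precedes xs (xs!i) (xs!j) \<longleftrightarrow> i < j"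
proof
  assume "precedes xs (xs!i) (xs!j)"
  then obtain i' j' where "i' < j'" "j' < length xs" "xs!i' = xs!i" "xs!j' = xs!j"
    unfolding precedes_def by blast
  with assms show "i < j" using nth_eq_iff_index_eq by (metis order.strict_trans)
qed (use assms precedes_nth in blast)

text \<open>The conditions of \<^const>\<open>strong_elim_order\<close>, \<^const>\<open>closed_order\<close> and the umbrella
property of proper interval orderings, phrased through precedence; \<^term>\<open>strong_at E vs x\<close>
collects the conditions whose first vertex is x.\<close>

definition strong_at :: "('a \<Rightarrow> 'a \<Rightarrow> bool) \<Rightarrow> 'a list \<Rightarrow> 'a \<Rightarrow> bool" where
  "strong_at E vs x \<longleftrightarrow>
    (\<forall>y z. precedes vs x y \<longrightarrow> precedes vs x z \<longrightarrow> y \<noteq> z \<longrightarrow> E x y \<longrightarrow> E x z \<longrightarrow> E y z) \<and>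
    (\<forall>k j l. precedes vs x k \<longrightarrow> precedes vs k l \<longrightarrow> precedes vs x j \<longrightarrow> j \<noteq> l
       \<longrightarrow> E x k \<longrightarrow> E k j \<longrightarrow> E x l \<longrightarrow> E j l)"

definition strong_list :: "('a \<Rightarrow> 'a \<Rightarrow> bool) \<Rightarrow> 'a list \<Rightarrow> bool" where
  "strong_list E vs \<longleftrightarrow> (\<forall>x. strong_at E vs x)"

definition closed_list :: "('a \<Rightarrow> 'a \<Rightarrow> bool) \<Rightarrow> 'a list \<Rightarrow> bool" where
  "closed_list E vs \<longleftrightarrow> (\<forall>x y z. (precedes vs x y \<and> precedes vs x z \<or> precedes vs y x \<and> precedes vs z x)
      \<longrightarrow> y \<noteq> z \<longrightarrow> E x y \<longrightarrow> E x z \<longrightarrow> E y z)"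

definition umbrella_list :: "('a \<Rightarrow> 'a \<Rightarrow> bool) \<Rightarrow> 'a list \<Rightarrow> bool" where
  "umbrella_list E vs \<longleftrightarrow>
    (\<forall>x y z. precedes vs x y \<longrightarrow> precedes vs y z \<longrightarrow> E x z \<longrightarrow> E x y \<and> E y z)"

lemma strong_list_imp_strong_elim_order:
  assumes d: "distinct vs" and s: "strong_list E vs"
  shows "strong_elim_order E vs"
  unfolding strong_elim_order_def perfect_elim_order_def
proof (intro conjI allI impI)
  fix i j k
  assume h: "i < length vs \<and> j < length vs \<and> k < length vs \<and> i < j \<and> i < k \<and> j \<noteq> k
    \<and> E (vs!i) (vs!j) \<and> E (vs!i) (vs!k)"
  have "vs!j \<noteq> vs!k" using h d nth_eq_iff_index_eq by metis
  moreover have "precedes vs (vs!i) (vs!j)" "precedes vs (vs!i) (vs!k)"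
    using h precedes_nth by auto
  moreover have "strong_at E vs (vs!i)" using s unfolding strong_list_def by blast
  ultimately show "E (vs!j) (vs!k)" using h unfolding strong_at_def by blast
next
  fix i j k l
  assume h: "i < length vs \<and> j < length vs \<and> k < length vs \<and> l < length vs
    \<and> i < k \<and> k < l \<and> i < j \<and> j \<noteq> l \<and> E (vs!i) (vs!k) \<and> E (vs!k) (vs!j) \<and> E (vs!i) (vs!l)"
  have "vs!j \<noteq> vs!l" using h d nth_eq_iff_index_eq by metis
  moreover have "precedes vs (vs!i) (vs!k)" "precedes vs (vs!k) (vs!l)" "precedes vs (vs!i) (vs!j)"
    using h precedes_nth by auto
  moreover have "strong_at E vs (vs!i)" using s unfolding strong_list_def by blast
  ultimately show "E (vs!j) (vs!l)" using h unfolding strong_at_def by blast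
qed

lemma closed_order_imp_closed_list:
  assumes "distinct vs" "closed_order E vs"
  shows "closed_list E vs"
  unfolding closed_list_def
proof (intro allI impI)
  fix x y z
  assume h: "precedes vs x y \<and> precedes vs x z \<or> precedes vs y x \<and> precedes vs z x"
    "y \<noteq> z" "E x y" "E x z"
  then have "x \<in> set vs" "y \<in> set vs" "z \<in> set vs" using precedes_in_set by metis+
  then obtain i j k where ijk: "i < length vs" "vs!i = x" "j < length vs" "vs!j = y"
    "k < length vs" "vs!k = z"
    by (metis in_set_conv_nth)
  then have "i < j \<and> i < k \<or> i > j \<and> i > k"
    using h(1) precedes_nth_iff[OF assms(1)] by metis
  then show "E y z" using assms(2) ijk h(2-4) unfolding closed_order_def by metis
qed

lemma closed_list_induced: "closed_list (induced E (set vs)) vs \<Longrightarrow> closed_list E vs"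
  using precedes_in_set unfolding closed_list_def induced_def by metis

lemma closed_list_rev: "closed_list E (rev vs) \<longleftrightarrow> closed_list E vs"
  unfolding closed_list_def precedes_rev by blast

lemma umbrella_list_rev:
  assumes "\<And>a b. E a b \<Longrightarrow> E b a"
  shows "umbrella_list E (rev vs) \<longleftrightarrow> umbrella_list E vs"
  unfolding umbrella_list_def precedes_rev using assms by blast

lemma closed_list_imp_strong_list:
  assumes cl: "closed_list E vs" and d: "distinct vs" and sym: "\<And>a b. E a b \<Longrightarrow> E b a"
  shows "strong_list E vs"
  unfolding strong_list_def strong_at_def
proof (intro allI conjI impI)
  fix x y z
  assume "precedes vs x y" "precedes vs x z" "y \<noteq> z" "E x y" "E x z"
  then show "E y z" using cl unfolding closed_list_def by blast
next
  fix x k j l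
  assume h: "precedes vs x k" "precedes vs k l" "precedes vs x j" "j \<noteq> l"
    "E x k" "E k j" "E x l"
  have xl: "precedes vs x l" using h d precedes_trans by metis
  have kl: "E k l"
    using cl h xl precedes_irrefl[OF d] unfolding closed_list_def by metis
  consider "j = k" | "precedes vs j k" | "precedes vs k j"
    using precedes_total precedes_in_set h(1,3) by metis
  then show "E j l"
  proof cases
    case 1
    then show ?thesis using kl by simp
  next
    case 2
    have "x \<noteq> j" using h(3) precedes_irrefl[OF d] by metis
    \<comment> \<open>x and j both precede their common neighbour k\<close>
    then have "E x j" using cl 2 h sym unfolding closed_list_def by metis
    then show ?thesis using cl h xl unfolding closed_list_def by metis
  next
    case 3
    then show ?thesis using cl h kl unfolding closed_list_def by metis
  qed
qed

lemma strong_at_transfer: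
  assumes "strong_at E vs x" "distinct ws"
    and nbr: "\<And>y. E x y \<Longrightarrow> precedes ws x y \<Longrightarrow> precedes vs x y"
    and nbr_pair: "\<And>k l. E x k \<Longrightarrow> E x l \<Longrightarrow> precedes ws x k \<Longrightarrow> precedes ws x l
      \<Longrightarrow> precedes ws k l \<Longrightarrow> precedes vs k l"
    and nbr_nbr: "\<And>k j l. E x k \<Longrightarrow> E x l \<Longrightarrow> precedes ws x k \<Longrightarrow> precedes ws k l
      \<Longrightarrow> E k j \<Longrightarrow> precedes ws x j \<Longrightarrow> precedes vs x j"
  shows "strong_at E ws x"
proof -
  have clique: "\<And>y z. precedes vs x y \<Longrightarrow> precedes vs x z \<Longrightarrow> y \<noteq> z \<Longrightarrow> E x y \<Longrightarrow> E x z
      \<Longrightarrow> E y z"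
    and strong: "\<And>k j l. precedes vs x k \<Longrightarrow> precedes vs k l \<Longrightarrow> precedes vs x j \<Longrightarrow> j \<noteq> l
      \<Longrightarrow> E x k \<Longrightarrow> E k j \<Longrightarrow> E x l \<Longrightarrow> E j l"
    using assms(1) unfolding strong_at_def by blast+
  show ?thesis
    unfolding strong_at_def
  proof (intro conjI allI impI)
    fix y z
    assume "precedes ws x y" "precedes ws x z" "y \<noteq> z" "E x y" "E x z"
    then show "E y z" using clique nbr by blast
  next
    fix k j l
    assume h: "precedes ws x k" "precedes ws k l" "precedes ws x j" "j \<noteq> l"
      "E x k" "E k j" "E x l"
    have "precedes ws x l" using h assms(2) precedes_trans by metis
    then show "E j l" using strong[of k l j] h nbr nbr_pair nbr_nbr by blast
  qed
qed

lemma strong_at_if_clique: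
  assumes "\<And>y z. precedes vs x y \<Longrightarrow> precedes vs x z \<Longrightarrow> y \<noteq> z \<Longrightarrow> E y z" "distinct vs"
  shows "strong_at E vs x"
proof -
  have "precedes vs x l" if "precedes vs x k" "precedes vs k l" for k l
    using that assms(2) precedes_trans by metis
  then show ?thesis using assms(1) unfolding strong_at_def by blast
qed

section \<open>Connected closed orderings are umbrella orderings\<close>

definition simplicial :: "('a \<Rightarrow> 'a \<Rightarrow> bool) \<Rightarrow> 'a set \<Rightarrow> 'a \<Rightarrow> bool" where
  "simplicial E V c \<longleftrightarrow> (\<forall>x\<in>V. \<forall>y\<in>V. E c x \<longrightarrow> E c y \<longrightarrow> x \<noteq> y \<longrightarrow> E x y)"

text \<open>Connectivity of \<^term>\<open>induced E S\<close> without the non-emptiness required by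
\<^const>\<open>connected_on\<close>, so that it can pass to the empty vertex set.\<close>

definition linked_on :: "('a \<Rightarrow> 'a \<Rightarrow> bool) \<Rightarrow> 'a set \<Rightarrow> bool" where
  "linked_on E S \<longleftrightarrow> (\<forall>x\<in>S. \<forall>y\<in>S. (induced E S)\<^sup>*\<^sup>* x y)"

lemma rtranclp_stays_in:
  assumes "r\<^sup>*\<^sup>* x y" "x \<in> A" "\<And>a b. a \<in> A \<Longrightarrow> r a b \<Longrightarrow> b \<in> A"
  shows "y \<in> A"
  using assms(1,2) by (induction rule: rtranclp_induct) (auto intro: assms(3))

lemma linked_on_remove_simplicial:
  assumes "linked_on E (insert n S)" "n \<notin> S" "simplicial E S n"
    and sym: "\<And>a b. E a b \<Longrightarrow> E b a" and irr: "\<And>a. \<not> E a a"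
  shows "linked_on E S"
  unfolding linked_on_def
proof (intro ballI)
  fix x y
  assume "x \<in> S" "y \<in> S"
  have "(induced E (insert n S))\<^sup>*\<^sup>* x y"
    using assms(1) \<open>x \<in> S\<close> \<open>y \<in> S\<close> unfolding linked_on_def by blast
  \<comment> \<open>a path through n is short-cut between the neighbours of n it uses\<close>
  then have "(y \<in> S \<longrightarrow> (induced E S)\<^sup>*\<^sup>* x y) \<and> (y = n \<longrightarrow> (\<exists>w\<in>S. (induced E S)\<^sup>*\<^sup>* x w \<and> E w n))"
  proof (induction rule: rtranclp_induct)
    case base
    show ?case using \<open>x \<in> S\<close> assms(2) by auto
  next
    case (step z z')
    then have z: "z \<in> insert n S" "z' \<in> insert n S" "E z z'" unfolding induced_def by auto
    show ?case
    proof (intro conjI impI)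
      assume "z' \<in> S"
      show "(induced E S)\<^sup>*\<^sup>* x z'"
      proof (cases "z = n")
        case True
        then obtain w where w: "w \<in> S" "(induced E S)\<^sup>*\<^sup>* x w" "E w n" using step.IH by blast
        have "w = z' \<or> E w z'"
          using assms(3) w \<open>z' \<in> S\<close> z(3) True sym unfolding simplicial_def by blast
        then show ?thesis using w \<open>z' \<in> S\<close> unfolding induced_def
          by (metis (no_types, lifting) rtranclp.rtrancl_into_rtrancl)
      next
        case False
        then show ?thesis using step.IH z \<open>z' \<in> S\<close> unfolding induced_def
          by (metis (no_types, lifting) insertE rtranclp.rtrancl_into_rtrancl)
      qed
    next
      assume "z' = n"
      then show "\<exists>w\<in>S. (induced E S)\<^sup>*\<^sup>* x w \<and> E w n" using step.IH z irr by blast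
    qed
  qed
  then show "(induced E S)\<^sup>*\<^sup>* x y" using \<open>y \<in> S\<close> by blast
qed

lemma umbrella_list_nth:
  assumes "umbrella_list E \<tau>" "p \<le> i" "i < j" "j \<le> q" "q < length \<tau>" "E (\<tau>!p) (\<tau>!q)"
  shows "E (\<tau>!i) (\<tau>!j)"
proof -
  have "E (\<tau>!i) (\<tau>!q)"
    using assms precedes_nth[of p i \<tau>] precedes_nth[of i q \<tau>] unfolding umbrella_list_def
    by (cases "p = i") auto
  then show ?thesis
    using assms precedes_nth[of i j \<tau>] precedes_nth[of j q \<tau>] unfolding umbrella_list_def
    by (cases "j = q") auto
qed

lemma umbrella_list_linked_consecutive:
  assumes d: "distinct \<tau>" and u: "umbrella_list E \<tau>" and c: "linked_on E (set \<tau>)"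
    and i: "Suc i < length \<tau>"
  shows "E (\<tau>!i) (\<tau>!Suc i)"
proof -
  let ?A = "set (take (Suc i) \<tau>)"
  have "\<tau>!Suc i \<notin> ?A"
    using d i by (auto simp: in_set_conv_nth nth_eq_iff_index_eq)
  moreover have "(induced E (set \<tau>))\<^sup>*\<^sup>* (\<tau>!i) (\<tau>!Suc i)"
    using c i unfolding linked_on_def by simp
  moreover have "\<tau>!i \<in> ?A" using i by (simp add: take_Suc_conv_app_nth)
  \<comment> \<open>a path leaving the prefix up to position i has an edge spanning positions i and i + 1\<close>
  ultimately obtain a b where "a \<in> ?A" "b \<notin> ?A" "induced E (set \<tau>) a b"
    using rtranclp_stays_in[of "induced E (set \<tau>)" "\<tau>!i" "\<tau>!Suc i" ?A] by blast
  then obtain p q where "p \<le> i" "Suc i \<le> q" "q < length \<tau>" "E (\<tau>!p) (\<tau>!q)"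
    unfolding induced_def
    by (auto simp: in_set_conv_nth) (metis less_Suc_eq_le not_less_eq_eq)
  then show ?thesis using umbrella_list_nth[OF u] by simp
qed

lemma closed_list_snoc_nbrs_upward:
  assumes cl: "closed_list E (\<tau> @ [n])" and d: "distinct (\<tau> @ [n])"
    and chain: "\<And>i. Suc i < length \<tau> \<Longrightarrow> E (\<tau>!i) (\<tau>!Suc i)"
    and "E (\<tau>!a) n" "a \<le> m" "m < length \<tau>"
  shows "E (\<tau>!m) n"
  using \<open>a \<le> m\<close> \<open>m < length \<tau>\<close>
proof (induction m rule: dec_induct)
  case base
  show ?case using \<open>E (\<tau>!a) n\<close> .
next
  case (step m)
  have "precedes (\<tau> @ [n]) (\<tau>!m) (\<tau>!Suc m)"
    using precedes_nth[of m "Suc m" "\<tau> @ [n]"] step.prems by (simp add: nth_append)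
  moreover have "precedes (\<tau> @ [n]) (\<tau>!m) n" "\<tau>!Suc m \<noteq> n"
    using step.prems d by (auto simp: precedes_append)
  ultimately show ?case
    using cl step chain[of m] unfolding closed_list_def by simp
qed

lemma umbrella_list_snoc:
  assumes d: "distinct (\<tau> @ [n])" and cl: "closed_list E (\<tau> @ [n])" and u: "umbrella_list E \<tau>"
    and c: "linked_on E (set \<tau>)" and sym: "\<And>a b. E a b \<Longrightarrow> E b a"
  shows "umbrella_list E (\<tau> @ [n])"
  unfolding umbrella_list_def
proof (intro allI impI)
  fix x y z
  assume h: "precedes (\<tau> @ [n]) x y" "precedes (\<tau> @ [n]) y z" "E x z"
  have n: "n \<notin> set \<tau>" using d by simp
  show "E x y \<and> E y z"
  proof (cases "z = n")
    case False
    then have "precedes \<tau> x y" "precedes \<tau> y z"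
      using h n by (auto simp: precedes_append dest: precedes_in_set)
    then show ?thesis using u h(3) unfolding umbrella_list_def by blast
  next
    case True
    then have xy: "precedes \<tau> x y" "y \<in> set \<tau>"
      using h n by (auto simp: precedes_append dest: precedes_in_set)
    then obtain a b where ab: "a < b" "b < length \<tau>" "\<tau>!a = x" "\<tau>!b = y"
      unfolding precedes_def by blast
    have "E y n"
      using closed_list_snoc_nbrs_upward[OF cl d umbrella_list_linked_consecutive[OF _ u c]]
        ab h(3) True d by auto
    moreover have "x \<noteq> y" "precedes (\<tau> @ [n]) x n" "precedes (\<tau> @ [n]) y n"
      using xy precedes_in_set precedes_irrefl d by (fastforce simp: precedes_append)+
    ultimately have "E x y"
      using cl h(3) True sym unfolding closed_list_def by blast
    then show ?thesis using \<open>E y n\<close> True by simp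
  qed
qed

lemma closed_list_linked_imp_umbrella:
  assumes "distinct \<tau>" "closed_list E \<tau>" "linked_on E (set \<tau>)"
    and sym: "\<And>a b. E a b \<Longrightarrow> E b a" and irr: "\<And>a. \<not> E a a"
  shows "umbrella_list E \<tau>"
  using assms(1-3)
proof (induction \<tau> rule: rev_induct)
  case Nil
  then show ?case unfolding umbrella_list_def by simp
next
  case (snoc n \<tau>)
  have cl: "closed_list E \<tau>"
    using snoc.prems(2) unfolding closed_list_def precedes_append by blast
  \<comment> \<open>the last vertex is simplicial, since all its neighbours precede it\<close>
  have "simplicial E (set \<tau>) n"
    using snoc.prems(2) sym unfolding simplicial_def closed_list_def precedes_append by auto
  then have "linked_on E (set \<tau>)"
    using linked_on_remove_simplicial[of E n "set \<tau>"] snoc.prems(1,3) sym irr by simp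
  then show ?case using umbrella_list_snoc[of \<tau> n E] snoc cl sym by simp
qed

section \<open>Moving a simplicial vertex of a block to the end\<close>

lemma strong_at_nonneighbour_reorder:
  assumes d: "distinct \<tau>" and s: "strong_list E \<tau>" and u: "umbrella_list E \<tau>"
    and x: "precedes \<tau> x c" "\<not> E x c"
    and "distinct \<rho>" "set \<rho> = set \<tau>"
    and agree: "\<And>k l. precedes \<tau> k c \<Longrightarrow> precedes \<tau> l c \<Longrightarrow> precedes \<rho> k l \<Longrightarrow> precedes \<tau> k l"
  shows "strong_at E \<rho> x"
proof (rule strong_at_transfer)
  show "strong_at E \<tau> x" using s unfolding strong_list_def by blast
  have c: "c \<in> set \<tau>" using x(1) precedes_in_set by metis
  have x_before: "precedes \<tau> x y" if "precedes \<rho> x y" for y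
  proof -
    have "y \<in> set \<tau>" using that precedes_in_set \<open>set \<rho> = set \<tau>\<close> by metis
    then consider "precedes \<tau> y c" | "y = c" | "precedes \<tau> c y" using c precedes_total by metis
    then show ?thesis using that x(1) agree precedes_trans[OF d] by cases blast+
  qed
  \<comment> \<open>the umbrella over x and c would otherwise join x to c\<close>
  have nbr_before: "precedes \<tau> y c" if "E x y" "precedes \<rho> x y" for y
  proof -
    have "y \<in> set \<tau>" using that(2) precedes_in_set \<open>set \<rho> = set \<tau>\<close> by metis
    moreover have "y \<noteq> c" "\<not> precedes \<tau> c y"
      using that x u unfolding umbrella_list_def by blast+
    ultimately show ?thesis using c precedes_total by metis
  qed
  show "\<And>y. E x y \<Longrightarrow> precedes \<rho> x y \<Longrightarrow> precedes \<tau> x y"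
    and "\<And>k j l. E x k \<Longrightarrow> E x l \<Longrightarrow> precedes \<rho> x k \<Longrightarrow> precedes \<rho> k l \<Longrightarrow> E k j
      \<Longrightarrow> precedes \<rho> x j \<Longrightarrow> precedes \<tau> x j"
    using x_before by blast+
  show "\<And>k l. E x k \<Longrightarrow> E x l \<Longrightarrow> precedes \<rho> x k \<Longrightarrow> precedes \<rho> x l \<Longrightarrow> precedes \<rho> k l
      \<Longrightarrow> precedes \<tau> k l"
    using nbr_before agree by blast
qed (fact \<open>distinct \<rho>\<close>)

text \<open>In this ordering a non-neighbour of c sees its later neighbours in the order of \<open>\<tau>\<close> or of
\<open>rev \<tau>\<close>, and a neighbour of c sees only later vertices of the clique formed by c and its
neighbours.\<close>

definition simplicial_last_order :: "('a \<Rightarrow> 'a \<Rightarrow> bool) \<Rightarrow> 'a list \<Rightarrow> 'a \<Rightarrow> 'a list" where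
  "simplicial_last_order E \<tau> c =
    filter (\<lambda>y. precedes \<tau> y c \<and> \<not> E y c) \<tau> @ rev (filter (\<lambda>y. precedes \<tau> c y \<and> \<not> E y c) \<tau>) @
    filter (\<lambda>y. precedes \<tau> y c \<and> E y c) \<tau> @ rev (filter (\<lambda>y. precedes \<tau> c y \<and> E y c) \<tau>)"

lemma ordering_of_simplicial_last_order:
  assumes "distinct \<tau>" "c \<in> set \<tau>"
  shows "ordering_of (set \<tau>) (simplicial_last_order E \<tau> c @ [c])"
  using assms precedes_asym[OF assms(1)] precedes_irrefl[OF assms(1)] precedes_total[of _ \<tau> c]
  unfolding ordering_of_def simplicial_last_order_def by (auto dest: precedes_in_set)

lemma simplicial_last_order_before:
  assumes d: "distinct \<tau>" and u: "umbrella_list E \<tau>"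
    and "precedes \<tau> k c" "precedes \<tau> l c" "precedes (simplicial_last_order E \<tau> c @ [c]) k l"
  shows "precedes \<tau> k l"
proof -
  have "\<not> precedes \<tau> c k" "\<not> precedes \<tau> c l" using assms(3,4) precedes_asym[OF d] by blast+
  then have "\<not> E k c \<and> \<not> E l c \<and> precedes \<tau> k l \<or> E k c \<and> E l c \<and> precedes \<tau> k l \<or> \<not> E k c \<and> E l c"
    using assms(3-5) unfolding simplicial_last_order_def
    by (auto simp: precedes_append precedes_rev precedes_filter)
  moreover have "precedes \<tau> k l" if "\<not> E k c" "E l c"
  proof -
    have "k \<noteq> l" "\<not> precedes \<tau> l k" using that assms(3) u unfolding umbrella_list_def by blast+
    then show ?thesis using assms(3,4) precedes_total precedes_in_set by metis
  qed
  ultimately show ?thesis by blast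
qed

lemma simplicial_last_order_after:
  assumes d: "distinct \<tau>" and u: "umbrella_list E \<tau>" and sym: "\<And>a b. E a b \<Longrightarrow> E b a"
    and "precedes \<tau> c k" "precedes \<tau> c l" "precedes (simplicial_last_order E \<tau> c @ [c]) k l"
  shows "precedes \<tau> l k"
proof -
  have "\<not> precedes \<tau> k c" "\<not> precedes \<tau> l c" using assms(4,5) precedes_asym[OF d] by blast+
  then have "\<not> E k c \<and> \<not> E l c \<and> precedes \<tau> l k \<or> E k c \<and> E l c \<and> precedes \<tau> l k \<or> \<not> E k c \<and> E l c"
    using assms(4-6) unfolding simplicial_last_order_def
    by (auto simp: precedes_append precedes_rev precedes_filter)
  moreover have "precedes \<tau> l k" if "\<not> E k c" "E l c"
  proof -
    have "k \<noteq> l" "\<not> precedes \<tau> k l" using that assms(4) u sym unfolding umbrella_list_def by blast+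
    then show ?thesis using assms(4,5) precedes_total precedes_in_set by metis
  qed
  ultimately show ?thesis by blast
qed

lemma simplicial_last_order_nbr_suffix:
  assumes "distinct \<tau>" "x = c \<or> E x c" "precedes (simplicial_last_order E \<tau> c @ [c]) x y"
  shows "y = c \<or> E y c"
  using assms precedes_asym[OF assms(1)] unfolding simplicial_last_order_def
  by (auto simp: precedes_append precedes_rev precedes_filter)

lemma strong_list_simplicial_last_order:
  assumes d: "distinct \<tau>" and cl: "closed_list E \<tau>" and u: "umbrella_list E \<tau>"
    and sym: "\<And>a b. E a b \<Longrightarrow> E b a" and c: "c \<in> set \<tau>" "simplicial E (set \<tau>) c"
  shows "strong_list E (simplicial_last_order E \<tau> c @ [c])"
  unfolding strong_list_def
proof
  fix x
  let ?\<rho> = "simplicial_last_order E \<tau> c @ [c]"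
  have \<rho>: "distinct ?\<rho>" "set ?\<rho> = set \<tau>"
    using ordering_of_simplicial_last_order[OF d c(1)] unfolding ordering_of_def by blast+
  consider "precedes \<tau> x c" "\<not> E x c" | "precedes \<tau> c x" "\<not> E x c" | "x \<notin> set \<tau> \<or> x = c \<or> E x c"
    using precedes_total c(1) by metis
  then show "strong_at E ?\<rho> x"
  proof cases
    case 1
    then show ?thesis
      using strong_at_nonneighbour_reorder[OF d closed_list_imp_strong_list[OF cl d sym] u _ _ \<rho>]
        simplicial_last_order_before[OF d u] by blast
  next
    case 2
    have "strong_list E (rev \<tau>)"
      using closed_list_imp_strong_list[of E "rev \<tau>"] closed_list_rev[of E \<tau>] cl d sym by simp
    moreover have "umbrella_list E (rev \<tau>)" using umbrella_list_rev[of E \<tau>] u sym by blast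
    moreover have "precedes (rev \<tau>) k l"
      if "precedes (rev \<tau>) k c" "precedes (rev \<tau>) l c" "precedes ?\<rho> k l" for k l
      using that simplicial_last_order_after[OF d u sym] unfolding precedes_rev by blast
    ultimately show ?thesis
      using 2 strong_at_nonneighbour_reorder[of "rev \<tau>" E x c ?\<rho>] \<rho> d unfolding precedes_rev by simp
  next
    case 3
    have "y \<in> set \<tau> \<and> (y = c \<or> E c y)" if "precedes ?\<rho> x y" for y
      using 3 that simplicial_last_order_nbr_suffix[OF d] precedes_in_set[OF that] \<rho>(2) sym
      by blast
    then show ?thesis
      using c(2) sym unfolding simplicial_def by (intro strong_at_if_clique[OF _ \<rho>(1)]) blast
  qed
qed

section \<open>Gluing orderings at a cut vertex\<close>

lemma strong_at_append_right:
  assumes "distinct (ys @ zs)" "x \<notin> set ys" "strong_at E zs x"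
  shows "strong_at E (ys @ zs) x"
proof -
  have later: "precedes (ys @ zs) x y \<longleftrightarrow> precedes zs x y" for y
    using assms(2) precedes_in_set unfolding precedes_append by metis
  have "precedes zs k l" if "precedes (ys @ zs) x k" "precedes (ys @ zs) k l" for k l
  proof -
    have "k \<notin> set ys" using that(1) later assms(1) precedes_in_set by fastforce
    then show ?thesis using that(2) precedes_in_set unfolding precedes_append by metis
  qed
  then show ?thesis using strong_at_transfer[OF assms(3,1)] later by blast
qed

lemma strong_at_append_left:
  assumes d: "distinct (ys @ zs)" and us: "set us \<subseteq> set zs" "length us \<le> 1" and x: "x \<in> set ys"
    and cross: "\<And>a b. a \<in> set ys \<Longrightarrow> b \<in> set zs \<Longrightarrow> E a b \<Longrightarrow> b \<in> set us"
    and "strong_at E (ys @ us) x"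
  shows "strong_at E (ys @ zs) x"
proof (rule strong_at_transfer[OF assms(6) d])
  have us_single: "k = l" if "k \<in> set us" "l \<in> set us" for k l
    using that us(2) by (cases us) auto
  have x_zs: "x \<notin> set zs" using d x by auto
  have zs_irrefl: "\<not> precedes zs a a" for a using d precedes_irrefl[of zs] by simp
  have nbr: "precedes ys x y \<or> y \<in> set us" if "E x y" "precedes (ys @ zs) x y" for y
    using that x_zs cross[OF x] precedes_in_set unfolding precedes_append by metis
  show "\<And>y. E x y \<Longrightarrow> precedes (ys @ zs) x y \<Longrightarrow> precedes (ys @ us) x y"
    using nbr x by (auto simp: precedes_append)
  show "precedes (ys @ us) k l"
    if "E x k" "E x l" "precedes (ys @ zs) x k" "precedes (ys @ zs) x l" "precedes (ys @ zs) k l"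
    for k l
    using nbr[OF that(1,3)] nbr[OF that(2,4)] that(5) d us us_single zs_irrefl
    by (auto simp: precedes_append dest: precedes_in_set)
  show "precedes (ys @ us) x j"
    if "E x k" "E x l" "precedes (ys @ zs) x k" "precedes (ys @ zs) k l" "E k j"
      "precedes (ys @ zs) x j"
    for k j l
  proof -
    have "precedes (ys @ zs) x l" using that(3,4) precedes_trans d by metis
    \<comment> \<open>if k were the vertex of us, then l would be another vertex of us\<close>
    then have "k \<in> set ys"
      using nbr[OF that(1,3)] nbr[OF that(2)] that(4) d us us_single zs_irrefl
      by (auto simp: precedes_append dest: precedes_in_set)
    then show ?thesis
      using that(5,6) x_zs x cross precedes_in_set unfolding precedes_append by metis
  qed
qed

lemma strong_list_append:
  assumes "distinct (ys @ zs)" "set us \<subseteq> set zs" "length us \<le> 1"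
    and "\<And>a b. a \<in> set ys \<Longrightarrow> b \<in> set zs \<Longrightarrow> E a b \<Longrightarrow> b \<in> set us"
    and "strong_list E (ys @ us)" "strong_list E zs"
  shows "strong_list E (ys @ zs)"
  using assms strong_at_append_left[of ys zs us] strong_at_append_right[of ys zs]
  unfolding strong_list_def by metis

section \<open>Separations and blocks\<close>

text \<open>The at most one shared vertex is kept as a list, so that it can end an elimination ordering
of one side.\<close>

definition separated_by :: "('a \<Rightarrow> 'a \<Rightarrow> bool) \<Rightarrow> 'a list \<Rightarrow> 'a set \<Rightarrow> 'a set \<Rightarrow> bool" where
  "separated_by E us V1 V2 \<longleftrightarrow> V1 \<inter> V2 = set us \<and> length us \<le> 1
     \<and> V1 - V2 \<noteq> {} \<and> V2 - V1 \<noteq> {} \<and> (\<forall>a\<in>V1 - V2. \<forall>b\<in>V2 - V1. \<not> E a b)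
     \<and> (\<forall>u\<in>set us. (\<exists>a\<in>V1 - V2. E u a) \<and> (\<exists>b\<in>V2 - V1. E u b))"

lemma separated_by_commute:
  assumes "separated_by E us V1 V2" "\<And>a b. E a b \<Longrightarrow> E b a"
  shows "separated_by E us V2 V1"
  using assms unfolding separated_by_def by (metis Int_commute)

lemma separated_by_component:
  assumes "x \<in> W" "y \<in> W" "\<not> (induced E W)\<^sup>*\<^sup>* x y"
  defines "C \<equiv> {z \<in> W. (induced E W)\<^sup>*\<^sup>* x z}"
  shows "separated_by E [] C (W - C)"
proof -
  have "\<not> E a b" if "a \<in> C" "b \<in> W - C" for a b
  proof
    assume "E a b"
    then have "induced E W a b" using that unfolding C_def induced_def by blast
    then show False using that unfolding C_def by (auto intro: rtranclp.rtrancl_into_rtrancl)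
  qed
  moreover have "x \<in> C" "y \<in> W - C" "C \<subseteq> W" using assms(1-3) unfolding C_def by auto
  ultimately show ?thesis unfolding separated_by_def by auto
qed

lemma separated_by_insert:
  assumes "separated_by E [] A B" "v \<notin> A \<union> B" and sym: "\<And>a b. E a b \<Longrightarrow> E b a"
  shows "\<exists>V1 V2 us. V1 \<union> V2 = insert v (A \<union> B) \<and> separated_by E us V1 V2"
proof -
  have AB: "A \<inter> B = {}" "A \<noteq> {}" "B \<noteq> {}" "\<forall>a\<in>A. \<forall>b\<in>B. \<not> E a b"
    using assms(1) unfolding separated_by_def by auto
  have diff: "insert v A - insert v B = A" "insert v B - insert v A = B"
    "insert v A - B = insert v A" "B - insert v A = B" "A - insert v B = A" "insert v B - A = insert v B"
    using AB(1) assms(2) by auto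
  consider "\<exists>a\<in>A. E v a" "\<exists>b\<in>B. E v b" | "\<forall>b\<in>B. \<not> E v b" | "\<forall>a\<in>A. \<not> E v a" by blast
  then show ?thesis
  proof cases
    case 1
    moreover have "insert v A \<inter> insert v B = set [v]" using AB(1) by auto
    ultimately have "separated_by E [v] (insert v A) (insert v B)"
      using AB unfolding separated_by_def diff by simp
    moreover have "insert v A \<union> insert v B = insert v (A \<union> B)" by blast
    ultimately show ?thesis by metis
  next
    case 2
    moreover have "insert v A \<inter> B = set []" using AB(1) assms(2) by auto
    ultimately have "separated_by E [] (insert v A) B"
      using AB unfolding separated_by_def diff by simp
    moreover have "insert v A \<union> B = insert v (A \<union> B)" by blast
    ultimately show ?thesis by metis
  next
    case 3
    moreover have "A \<inter> insert v B = set []" using AB(1) assms(2) by auto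
    ultimately have "separated_by E [] A (insert v B)"
      using AB sym unfolding separated_by_def diff by auto
    moreover have "A \<union> insert v B = insert v (A \<union> B)" by blast
    ultimately show ?thesis by metis
  qed
qed
lemma separated_by_if_separable:
  assumes "V \<noteq> {}" "\<not> nonseparable_on E V" and sym: "\<And>a b. E a b \<Longrightarrow> E b a"
  shows "\<exists>V1 V2 us. V1 \<union> V2 = V \<and> separated_by E us V1 V2"
proof -
  consider "\<not> connected_on E V" | v where "cut_vertex_on E V v"
    using assms(2) unfolding nonseparable_on_def by blast
  then show ?thesis
  proof cases
    case 1
    then obtain x y where "x \<in> V" "y \<in> V" "\<not> (induced E V)\<^sup>*\<^sup>* x y"
      using assms(1) unfolding connected_on_def joined_in_def by blast
    then have "separated_by E [] {z \<in> V. (induced E V)\<^sup>*\<^sup>* x z} (V - {z \<in> V. (induced E V)\<^sup>*\<^sup>* x z})"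
      by (rule separated_by_component)
    moreover have "{z \<in> V. (induced E V)\<^sup>*\<^sup>* x z} \<union> (V - {z \<in> V. (induced E V)\<^sup>*\<^sup>* x z}) = V"
      by blast
    ultimately show ?thesis by metis
  next
    case 2
    then obtain x y where xy: "v \<in> V" "x \<in> V - {v}" "y \<in> V - {v}"
      "\<not> (induced E (V - {v}))\<^sup>*\<^sup>* x y"
      unfolding cut_vertex_on_def joined_in_def by blast
    let ?C = "{z \<in> V - {v}. (induced E (V - {v}))\<^sup>*\<^sup>* x z}"
    have "separated_by E [] ?C (V - {v} - ?C)"
      using separated_by_component[of x "V - {v}" y E] xy by blast
    moreover have "insert v (?C \<union> (V - {v} - ?C)) = V" using xy(1) by blast
    ultimately show ?thesis using separated_by_insert[of E ?C "V - {v} - ?C" v] sym by simp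
  qed
qed

lemma nonseparable_on_edge:
  assumes "E v w" "E w v" "v \<noteq> w"
  shows "nonseparable_on E {v, w}"
  unfolding nonseparable_on_def connected_on_def
proof (intro conjI ballI allI)
  have "induced E {v, w} v w" "induced E {v, w} w v" using assms(1,2) unfolding induced_def by auto
  then show "joined_in E {v, w} x y" if "x \<in> {v, w}" "y \<in> {v, w}" for x y
    using that unfolding joined_in_def by auto
  show "\<not> cut_vertex_on E {v, w} u" for u
    unfolding cut_vertex_on_def joined_in_def by auto
qed simp

lemma nonseparable_on_one_side:
  assumes ns: "nonseparable_on E B" and sep: "separated_by E us V1 V2" and "B \<subseteq> V1 \<union> V2"
  shows "B \<subseteq> V1 \<or> B \<subseteq> V2"
proof (rule ccontr)
  assume "\<not> (B \<subseteq> V1 \<or> B \<subseteq> V2)"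
  then obtain b y where bxy: "b \<in> B" "b \<in> V1 - V2" "y \<in> B" "y \<in> V2 - V1" using assms(3) by blast
  let ?S = "B - set us"
  \<comment> \<open>without the shared vertex, no edge leaves the side of b\<close>
  have "y \<in> V1 - V2" if "(induced E ?S)\<^sup>*\<^sup>* b y"
  proof (rule rtranclp_stays_in[OF that \<open>b \<in> V1 - V2\<close>])
    fix a z
    assume "a \<in> V1 - V2" "induced E ?S a z"
    then show "z \<in> V1 - V2"
      using sep assms(3) unfolding separated_by_def induced_def by blast
  qed
  then have not_joined: "\<not> joined_in E ?S b y" using bxy unfolding joined_in_def by blast
  have joined: "joined_in E B b y" using ns bxy unfolding nonseparable_on_def connected_on_def by blast
  have "length us \<le> 1" "set us \<subseteq> V1 \<inter> V2" using sep unfolding separated_by_def by auto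
  then consider "B \<inter> set us = {}" | u where "set us = {u}" "u \<in> B"
    by (cases us) auto
  then show False
  proof cases
    case 1
    then show False using joined not_joined by (simp add: Diff_triv)
  next
    case 2
    then have "cut_vertex_on E B u"
      using joined not_joined bxy \<open>set us \<subseteq> V1 \<inter> V2\<close> unfolding cut_vertex_on_def by auto
    then show False using ns unfolding nonseparable_on_def by blast
  qed
qed

lemma is_block_separated:
  assumes blk: "is_block V1 E B" and sep: "separated_by E us V1 V2"
    and sym: "\<And>a b. E a b \<Longrightarrow> E b a"
  shows "is_block (V1 \<union> V2) E B"
proof -
  have B: "B \<subseteq> V1" "nonseparable_on E B" "B \<noteq> {}"
    and max: "\<And>B'. B \<subset> B' \<Longrightarrow> B' \<subseteq> V1 \<Longrightarrow> \<not> nonseparable_on E B'"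
    using blk unfolding is_block_def nonseparable_on_def connected_on_def by blast+
  have "\<not> nonseparable_on E B'" if "B \<subset> B'" "B' \<subseteq> V1 \<union> V2" for B'
  proof
    assume ns: "nonseparable_on E B'"
    then have "B' \<subseteq> V2" using nonseparable_on_one_side[OF ns sep] that max by blast
    then have "B \<subseteq> V1 \<inter> V2" using that(1) B(1) by blast
    \<comment> \<open>so B is the shared vertex alone, which in V1 lies on an edge\<close>
    then obtain u where "B = {u}" "u \<in> set us"
      using sep B(3) unfolding separated_by_def by (cases us) auto
    moreover obtain w where "w \<in> V1 - V2" "E u w"
      using sep \<open>u \<in> set us\<close> unfolding separated_by_def by blast
    moreover have "u \<in> V2" using \<open>u \<in> set us\<close> sep unfolding separated_by_def by blast
    ultimately show False
      using max[of "{u, w}"] nonseparable_on_edge[of E u w] sym B(1) by auto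
  qed
  then show ?thesis using B blk unfolding is_block_def by blast
qed

lemma is_block_self: "nonseparable_on E V \<Longrightarrow> is_block V E V"
  unfolding is_block_def by blast

lemma separated_by_shared:
  assumes "separated_by E us V1 V2" "u \<in> set us"
  shows "V1 \<inter> V2 = {u}"
  using assms unfolding separated_by_def by (cases us) auto

lemma simplicial_separator:
  assumes cf: "claw_free (V1 \<union> V2) E" and irr: "\<And>a. \<not> E a a"
    and sep: "separated_by E us V1 V2" and "u \<in> set us"
  shows "simplicial E V1 u"
  unfolding simplicial_def
proof (intro ballI impI)
  fix x y
  assume xy: "x \<in> V1" "y \<in> V1" "E u x" "E u y" "x \<noteq> y"
  have shared: "V1 \<inter> V2 = {u}" using separated_by_shared[OF sep \<open>u \<in> set us\<close>] .
  obtain b where b: "b \<in> V2 - V1" "E u b" using sep \<open>u \<in> set us\<close> unfolding separated_by_def by blast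
  have "x \<noteq> u" "y \<noteq> u" using xy irr by metis+
  then have "x \<in> V1 - V2" "y \<in> V1 - V2" using xy shared by blast+
  then have "\<not> E x b" "\<not> E y b" using sep b unfolding separated_by_def by blast+
  moreover have "distinct [u, x, y, b]" using xy b shared \<open>x \<noteq> u\<close> \<open>y \<noteq> u\<close> by auto
  moreover have "u \<in> V1 \<union> V2" "x \<in> V1 \<union> V2" "y \<in> V1 \<union> V2" "b \<in> V1 \<union> V2" using xy b shared by auto
  ultimately show "E x y" using cf xy b unfolding claw_free_def by blast
qed

text \<open>The induction invariant: for \<open>us = []\<close> a strong elimination ordering exists, and for
\<open>us = [c]\<close> one ends at any prescribed simplicial vertex c.\<close>

definition strongly_orderable :: "('a \<Rightarrow> 'a \<Rightarrow> bool) \<Rightarrow> 'a set \<Rightarrow> bool" where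
  "strongly_orderable E V \<longleftrightarrow> (\<forall>us. length us \<le> 1 \<longrightarrow> set us \<subseteq> V \<longrightarrow> (\<forall>u\<in>set us. simplicial E V u)
     \<longrightarrow> (\<exists>vs. ordering_of V (vs @ us) \<and> strong_list E (vs @ us)))"

lemma strongly_orderable_empty: "strongly_orderable E {}"
  unfolding strongly_orderable_def ordering_of_def strong_list_def
  by (auto intro: strong_at_if_clique)

lemma strongly_orderable_closed_block:
  assumes "closed_graph V (induced E V)" "connected_on E V"
    and sym: "\<And>a b. E a b \<Longrightarrow> E b a" and irr: "\<And>a. \<not> E a a"
  shows "strongly_orderable E V"
  unfolding strongly_orderable_def
proof (intro allI impI)
  fix us :: "'a list"
  assume us: "length us \<le> 1" "set us \<subseteq> V" "\<forall>u\<in>set us. simplicial E V u"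
  obtain \<tau> where \<tau>: "distinct \<tau>" "set \<tau> = V" "closed_order (induced E V) \<tau>"
    using assms(1) unfolding closed_graph_def ordering_of_def by blast
  have cl: "closed_list E \<tau>"
    using closed_list_induced closed_order_imp_closed_list \<tau> by metis
  have "linked_on E (set \<tau>)"
    using assms(2) \<tau>(2) unfolding linked_on_def connected_on_def joined_in_def by blast
  then have u: "umbrella_list E \<tau>" using closed_list_linked_imp_umbrella \<tau>(1) cl sym irr by blast
  consider "us = []" | c where "us = [c]" using us(1) by (cases us) auto
  then show "\<exists>vs. ordering_of V (vs @ us) \<and> strong_list E (vs @ us)"
  proof cases
    case 1
    then show ?thesis
      using closed_list_imp_strong_list[OF cl \<tau>(1) sym] \<tau> unfolding ordering_of_def by auto
  next
    case 2
    then show ?thesis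
      using ordering_of_simplicial_last_order[OF \<tau>(1)] strong_list_simplicial_last_order[OF \<tau>(1) cl u sym]
        us \<tau>(2) by auto
  qed
qed

lemma strongly_orderable_union_ending:
  assumes sep: "separated_by E us V1 V2" and sym: "\<And>a b. E a b \<Longrightarrow> E b a"
    and ord: "strongly_orderable E V1" "strongly_orderable E V2"
    and us: "\<forall>u\<in>set us. simplicial E V2 u"
    and cs: "length cs \<le> 1" "set cs \<subseteq> V1" "\<forall>c\<in>set cs. simplicial E (V1 \<union> V2) c"
  shows "\<exists>vs. ordering_of (V1 \<union> V2) (vs @ cs) \<and> strong_list E (vs @ cs)"
proof -
  have "\<forall>c\<in>set cs. simplicial E V1 c" using cs(3) unfolding simplicial_def by blast
  then obtain zs where zs: "ordering_of V1 (zs @ cs)" "strong_list E (zs @ cs)"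
    using ord(1) cs(1,2) unfolding strongly_orderable_def by blast
  have shared: "V1 \<inter> V2 = set us" "length us \<le> 1"
    and no_edge: "\<And>a b. a \<in> V2 - V1 \<Longrightarrow> b \<in> V1 - V2 \<Longrightarrow> \<not> E a b"
    using sep sym unfolding separated_by_def by blast+
  then obtain ys where ys: "ordering_of V2 (ys @ us)" "strong_list E (ys @ us)"
    using ord(2) us unfolding strongly_orderable_def by blast
  then have set_ys: "set ys = V2 - V1" using shared unfolding ordering_of_def by auto
  then have "distinct (ys @ zs @ cs)" using ys(1) zs(1) unfolding ordering_of_def by auto
  moreover have "strong_list E (ys @ zs @ cs)"
  proof (rule strong_list_append[OF calculation _ shared(2) _ ys(2) zs(2)])
    show "set us \<subseteq> set (zs @ cs)" using zs(1) shared(1) unfolding ordering_of_def by auto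
    show "b \<in> set us" if "a \<in> set ys" "b \<in> set (zs @ cs)" "E a b" for a b
      using that no_edge set_ys zs(1) shared(1) unfolding ordering_of_def by blast
  qed
  moreover have "set (ys @ zs @ cs) = V1 \<union> V2" using set_ys zs(1) unfolding ordering_of_def by auto
  ultimately show ?thesis unfolding ordering_of_def by (metis append_assoc)
qed

lemma strongly_orderable_union:
  assumes sep: "separated_by E us V1 V2" and sym: "\<And>a b. E a b \<Longrightarrow> E b a"
    and ord: "strongly_orderable E V1" "strongly_orderable E V2"
    and us: "\<forall>u\<in>set us. simplicial E V1 u \<and> simplicial E V2 u"
  shows "strongly_orderable E (V1 \<union> V2)"
  unfolding strongly_orderable_def
proof (intro allI impI)
  fix cs :: "'a list"
  assume cs: "length cs \<le> 1" "set cs \<subseteq> V1 \<union> V2" "\<forall>c\<in>set cs. simplicial E (V1 \<union> V2) c"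
  show "\<exists>vs. ordering_of (V1 \<union> V2) (vs @ cs) \<and> strong_list E (vs @ cs)"
  proof (cases "set cs \<subseteq> V1")
    case True
    then show ?thesis using strongly_orderable_union_ending[OF sep sym ord] us cs by blast
  next
    case False
    then have "set cs \<subseteq> V2" using cs(1,2) by (cases cs) auto
    then show ?thesis
      using strongly_orderable_union_ending[OF separated_by_commute[OF sep sym] sym ord(2,1)] us cs
      by (simp add: Un_commute)
  qed
qed

lemma strongly_orderable_imp_strongly_chordal:
  assumes "strongly_orderable E V"
  shows "strongly_chordal V E"
proof -
  obtain vs where "ordering_of V vs" "strong_list E vs"
    using assms[unfolded strongly_orderable_def, rule_format, of "[]"] by auto
  then show ?thesis
    unfolding strongly_chordal_def ordering_of_def using strong_list_imp_strong_elim_order by blast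
qed

lemma claw_free_subset: "claw_free V E \<Longrightarrow> W \<subseteq> V \<Longrightarrow> claw_free W E"
  unfolding claw_free_def by blast

lemma strongly_orderable_if_blocks_closed:
  assumes "finite V" and sym: "\<And>a b. E a b \<Longrightarrow> E b a" and irr: "\<And>a. \<not> E a a"
    and "claw_free V E" "\<And>B. is_block V E B \<Longrightarrow> closed_graph B (induced E B)"
  shows "strongly_orderable E V"
  using assms(1,4,5)
proof (induction "card V" arbitrary: V rule: less_induct)
  case less
  consider "V = {}" | "nonseparable_on E V" | "V \<noteq> {}" "\<not> nonseparable_on E V" by blast
  then show ?case
  proof cases
    case 1
    then show ?thesis using strongly_orderable_empty by simp
  next
    case 2
    then show ?thesis
      using strongly_orderable_closed_block less.prems(3) is_block_self sym irr
      unfolding nonseparable_on_def by blast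
  next
    case 3
    then obtain V1 V2 us where V: "V1 \<union> V2 = V" and sep: "separated_by E us V1 V2"
      using separated_by_if_separable sym by metis
    have side: "strongly_orderable E W \<and> (\<forall>u\<in>set us. simplicial E W u)"
      if sep_W: "separated_by E us W W'" and V_W: "W \<union> W' = V" for W W'
    proof
      have "W' - W \<noteq> {}" using sep_W unfolding separated_by_def by blast
      then have "W \<subset> V" using V_W by blast
      show "strongly_orderable E W"
      proof (rule less.hyps)
        show "card W < card V" using psubset_card_mono less.prems(1) \<open>W \<subset> V\<close> by blast
        show "finite W" "claw_free W E"
          using finite_subset claw_free_subset less.prems(1,2) \<open>W \<subset> V\<close> by blast+
        show "closed_graph B (induced E B)" if "is_block W E B" for B
          using is_block_separated[OF that sep_W sym] V_W less.prems(3) by simp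
      qed
      show "\<forall>u\<in>set us. simplicial E W u"
        using simplicial_separator[OF _ irr sep_W] V_W less.prems(2) by blast
    qed
    have "V2 \<union> V1 = V" using V by blast
    then show ?thesis
      using strongly_orderable_union[OF sep sym] side[OF sep V]
        side[OF separated_by_commute[OF sep sym]] V by simp
  qed
qed

theorem mainTheorem16:
  fixes V :: "'a set" and E :: "'a \<Rightarrow> 'a \<Rightarrow> bool"
  assumes "finite_simple_graph V E"
    and "claw_free V E"
    and "\<forall>B. is_block V E B \<longrightarrow> closed_graph B (induced E B)"
  shows "strongly_chordal V E \<and> claw_free V E"
proof -
  have "finite V" and sym: "\<And>a b. E a b \<Longrightarrow> E b a" and irr: "\<And>a. \<not> E a a"
    using assms(1) unfolding finite_simple_graph_def by blast+
  then have "strongly_orderable E V"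
    using strongly_orderable_if_blocks_closed assms(2,3) by blast
  then show ?thesis using strongly_orderable_imp_strongly_chordal assms(2) by blast
qed

end
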